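(* Let $0\le q<\tfrac12$ and $p=1-q$. Let $X_1,X_2,\dots$ be i.i.d. letters in $\{S,H\}$ with $\mathbb{P}[X_i=S]=q$ and $\mathbb{P}[X_i=H]=p$. Define the selfish-mining attack cycle and the random variable $L$ as follows: (i) if $X_1=H$, the cycle is $H$ and $L=1$; (ii) if $X_1X_2=SH$, the cycle is $X_1X_2X_3$ (with $X_3\in\{S,H\}$ arbitrary) and $L=2$; (iii) if $X_1X_2=SS$, the cycle is $X_1\cdots X_m$, where $m\ge 3$ is the first index with $X_m=H$ and (number of $S$ among $X_1,\dots,X_m$) $-$ (number of $H$ among $X_1,\dots,X_m$) $=1$; in this case $L$ is the number of letters $S$ in the cycle. Then $\mathbb{P}[L=1]=p$, $\mathbb{P}[L=2]=pq+pq^2$, and for every $n\ge 3$, $$\mathbb{P}[L=n]=pq^2(pq)^{n-2}C_{n-2},$$ where $C_k=\frac{(2k)!}{k!\,(k+1)!}$ is the $k$-th Catalan number.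
   Context: This models the Selfish Mining strategy in Bitcoin: each newly validated block is found by the selfish miner (letter $S$, relative hashrate $q$) or by the honest miners (letter $H$, relative hashrate $p$), independently. $L$ is the number of blocks added to the official blockchain during one attack cycle. For example, the cycle $SSSHSHH$ has $L=4$, and the cycle $SSH$ has $L=2$. *)

theory Defs
  imports "HOL-Probability.Probability"
begin

text \<open>Letters: True = S (selfish miner), False = H (honest miners).
  The stream index i (0-based) holds the letter X_(i+1).\<close>

definition sm_space :: "real \<Rightarrow> bool stream measure" where
  "sm_space q = stream_space (measure_pmf (bernoulli_pmf q))"

definition numS :: "nat \<Rightarrow> bool stream \<Rightarrow> nat" where
  "numS m \<omega> = length (filter (\<lambda>x. x) (stake m \<omega>))"

definition numH :: "nat \<Rightarrow> bool stream \<Rightarrow> nat" where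
  "numH m \<omega> = length (filter (\<lambda>x. \<not> x) (stake m \<omega>))"

definition cycle_end :: "bool stream \<Rightarrow> nat \<Rightarrow> bool" where
  "cycle_end \<omega> m \<longleftrightarrow> 3 \<le> m \<and> \<not> \<omega> !! (m - 1) \<and> int (numS m \<omega>) - int (numH m \<omega>) = 1"

text \<open>L; set to 0 on the (null) event that case (iii) never terminates.\<close>
definition cycleL :: "bool stream \<Rightarrow> nat" where
  "cycleL \<omega> =
     (if \<not> \<omega> !! 0 then 1
      else if \<not> \<omega> !! 1 then 2
      else if (\<exists>m. cycle_end \<omega> m) then numS (LEAST m. cycle_end \<omega> m) \<omega>
      else 0)"

definition catalan :: "nat \<Rightarrow> real" where
  "catalan k = fact (2 * k) / (fact k * fact (k + 1))"

end

theory Submission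
  imports Defs
begin

text \<open>After the prefix SS the selfish lead #S - #H equals 2 and moves by one with every letter;
  case (iii) ends exactly when the lead first returns to 1, necessarily with an H. A cycle ending at
  position m has 2L = m + 1, so inside case (iii) the event L = n says that a walk started at height 1
  first reaches 0 after 2n - 3 steps. Conditioning on the first letter gives a one-step recursion for
  these first-passage probabilities, and the ballot formula
  h / (2u + h) * binomial (2u + h, u) * q^u * p^(u + h) solves it; for h = 1 it is the Catalan term.\<close>

fun first_passage :: "nat \<Rightarrow> bool list \<Rightarrow> bool" where
  "first_passage h [] \<longleftrightarrow> h = 0"
| "first_passage h (x # xs) \<longleftrightarrow> h \<noteq> 0 \<and> first_passage (if x then Suc h else h - 1) xs"

text \<open>The number of paths with steps \<plusminus>1 from height h that first reach 0 after u up-steps and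
  u + h down-steps.\<close>

definition ballot :: "nat \<Rightarrow> nat \<Rightarrow> real" where
  "ballot h u =
     (if h = 0 then (if u = 0 then 1 else 0)
      else real h * fact (h + 2 * u - 1) / (fact u * fact (u + h)))"

lemma ballot_0_right [simp]: "ballot h 0 = 1"
  by (cases h) (simp_all add: ballot_def fact_Suc)

lemma ballot_Suc_right: "ballot h (Suc u) = real h * fact (h + 2 * u + 1) / (fact (Suc u) * fact (u + h + 1))"
  by (simp add: ballot_def)

lemma ballot_Suc_Suc: "ballot (Suc h) (Suc u) = ballot (h + 2) u + ballot h (Suc u)"
proof -
  define A where "A = (fact u :: real)"
  define B where "B = (fact (u + h + 1) :: real)"
  define N where "N = (fact (h + 2 * u + 1) :: real)"
  define U where "U = real u + 1"
  define V where "V = real u + real h + 2"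
  define M where "M = N / (U * V * A * B)"
  have nz: "U \<noteq> 0" "V \<noteq> 0" "A \<noteq> 0" "B \<noteq> 0"
    by (simp_all add: U_def V_def A_def B_def)
  have A': "fact (Suc u) = U * A"
    by (simp add: A_def U_def)
  have B': "fact (u + h + 2) = V * B"
    using fact_Suc[of "u + h + 1"] by (simp add: B_def V_def algebra_simps)
  have N': "fact (h + 2 * u + 2) = (real h + 2 * real u + 2) * N"
    using fact_Suc[of "h + 2 * u + 1"] by (simp add: N_def algebra_simps)
  have "ballot (Suc h) (Suc u) = (real h + 1) * (real h + 2 * real u + 2) * M"
  proof -
    have "ballot (Suc h) (Suc u) = (real h + 1) * fact (h + 2 * u + 2) / (fact (Suc u) * fact (u + h + 2))"
      by (simp add: ballot_Suc_right algebra_simps)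
    also have "\<dots> = (real h + 1) * (real h + 2 * real u + 2) * M"
      unfolding A' B' N' M_def using nz by (simp add: field_simps)
    finally show ?thesis .
  qed
  moreover have "ballot (h + 2) u = (real h + 2) * U * M"
  proof -
    have "ballot (h + 2) u = (real h + 2) * N / (A * fact (u + h + 2))"
      by (simp add: ballot_def A_def N_def algebra_simps)
    also have "\<dots> = (real h + 2) * U * M"
      unfolding B' M_def using nz by (simp add: field_simps)
    finally show ?thesis .
  qed
  moreover have "ballot h (Suc u) = real h * V * M"
  proof -
    have "ballot h (Suc u) = real h * N / (fact (Suc u) * B)"
      by (simp add: ballot_Suc_right B_def N_def)
    also have "\<dots> = real h * V * M"
      unfolding A' M_def using nz by (simp add: field_simps)
    finally show ?thesis .
  qed
  ultimately show ?thesis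
    by (simp add: U_def V_def algebra_simps)
qed

definition first_passage_prob :: "real \<Rightarrow> nat \<Rightarrow> nat \<Rightarrow> real" where
  "first_passage_prob q h l =
     (if h \<le> l \<and> even (l - h)
      then ballot h ((l - h) div 2) * q ^ ((l - h) div 2) * (1 - q) ^ ((l + h) div 2)
      else 0)"

lemma first_passage_prob_0_right: "first_passage_prob q h 0 = (if h = 0 then 1 else 0)"
  by (simp add: first_passage_prob_def)

lemma first_passage_prob_0_Suc: "first_passage_prob q 0 (Suc l) = 0"
  by (auto simp: first_passage_prob_def ballot_def)

lemma first_passage_prob_Suc_Suc:
  "first_passage_prob q (Suc h) (Suc l) = q * first_passage_prob q (h + 2) l + (1 - q) * first_passage_prob q h l"
proof (cases "h \<le> l \<and> even (l - h)")
  case True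
  then obtain u where l: "l = h + 2 * u"
    by (metis dvd_def le_add_diff_inverse)
  show ?thesis
  proof (cases u)
    case 0
    then show ?thesis
      using l by (simp add: first_passage_prob_def)
  next
    case (Suc v)
    have "l - (h + 2) = 2 * v" "l + h = 2 * (h + u)"
      using l Suc by simp_all
    then show ?thesis
      using l Suc by (simp add: first_passage_prob_def ballot_Suc_Suc algebra_simps)
  qed
next
  case False
  then show ?thesis
    by (auto simp: first_passage_prob_def)
qed

lemma space_sm_space [simp]: "space (sm_space q) = UNIV"
  by (simp add: sm_space_def space_stream_space)

lemma sets_sm_space [measurable_cong]: "sets (sm_space q) = sets (stream_space (count_space UNIV))"
  unfolding sm_space_def by (rule sets_stream_space_cong) simp

lemma prob_space_sm_space: "prob_space (sm_space q)"
  unfolding sm_space_def by (rule prob_space.prob_space_stream_space) (rule prob_space_measure_pmf)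

lemma measure_sm_space_UNIV [simp]: "measure (sm_space q) UNIV = 1"
  using prob_space.prob_space[OF prob_space_sm_space, of q] by simp

lemma prob_sm_space_cons:
  assumes "0 \<le> q" "q \<le> 1" "Measurable.pred (sm_space q) P"
  shows "\<P>(\<omega> in sm_space q. P \<omega>) =
    q * \<P>(\<omega> in sm_space q. P (True ## \<omega>)) + (1 - q) * \<P>(\<omega> in sm_space q. P (False ## \<omega>))"
proof -
  have "ennreal \<P>(\<omega> in sm_space q. P \<omega>) =
      (\<integral>\<^sup>+t. ennreal \<P>(\<omega> in sm_space q. P (t ## \<omega>)) \<partial>measure_pmf (bernoulli_pmf q))"
    using assms(3) unfolding sm_space_def pred_def
    by (rule prob_space.prob_stream_space[OF prob_space_measure_pmf])
  also have "\<dots> = ennreal (q * \<P>(\<omega> in sm_space q. P (True ## \<omega>)) + (1 - q) * \<P>(\<omega> in sm_space q. P (False ## \<omega>)))"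
    using assms(1,2) by (simp add: ennreal_mult[symmetric] ennreal_plus[symmetric] del: ennreal_plus)
  finally show ?thesis
    using assms(1,2) by (subst (asm) ennreal_inj) auto
qed

lemma prob_first_passage:
  assumes "0 \<le> q" "q \<le> 1"
  shows "\<P>(\<omega> in sm_space q. first_passage h (stake l \<omega>)) = first_passage_prob q h l"
proof (induction l arbitrary: h)
  case 0
  then show ?case
    by (simp add: first_passage_prob_0_right)
next
  case (Suc l)
  have "\<P>(\<omega> in sm_space q. first_passage h (stake (Suc l) \<omega>)) =
      q * \<P>(\<omega> in sm_space q. first_passage h (True # stake l \<omega>)) +
      (1 - q) * \<P>(\<omega> in sm_space q. first_passage h (False # stake l \<omega>))"
    using assms by (subst prob_sm_space_cons) simp_all
  also have "\<dots> = first_passage_prob q h (Suc l)"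
    using Suc.IH by (cases h) (simp_all add: first_passage_prob_0_Suc first_passage_prob_Suc_Suc)
  finally show ?case .
qed

definition lead :: "bool stream \<Rightarrow> nat \<Rightarrow> int" where
  "lead \<omega> m = int (numS m \<omega>) - int (numH m \<omega>)"

lemma numS_add_numH: "numS m \<omega> + numH m \<omega> = m"
  unfolding numS_def numH_def using sum_length_filter_compl[of "\<lambda>x. x" "stake m \<omega>"] by simp

lemma lead_0 [simp]: "lead \<omega> 0 = 0"
  by (simp add: lead_def numS_def numH_def)

lemma lead_Suc: "lead \<omega> (Suc m) = lead \<omega> m + (if \<omega> !! m then 1 else -1)"
  unfolding lead_def numS_def numH_def stake_Suc by simp

lemma cycle_end_iff_lead: "cycle_end \<omega> m \<longleftrightarrow> 3 \<le> m \<and> \<not> \<omega> !! (m - 1) \<and> lead \<omega> m = 1"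
  by (simp add: cycle_end_def lead_def)

lemma numS_cycle_end: "cycle_end \<omega> m \<Longrightarrow> 2 * numS m \<omega> = m + 1"
  using numS_add_numH[of m \<omega>] by (simp add: cycle_end_def)

lemma first_passage_stake_sdrop:
  "lead \<omega> k = 1 + int h \<Longrightarrow>
    first_passage h (stake l (sdrop k \<omega>)) \<longleftrightarrow> lead \<omega> (k + l) = 1 \<and> (\<forall>j\<in>{k..<k + l}. 1 < lead \<omega> j)"
proof (induction l arbitrary: h k)
  case 0
  then show ?case by simp
next
  case (Suc l)
  have "first_passage h (stake (Suc l) (sdrop k \<omega>)) \<longleftrightarrow>
      h \<noteq> 0 \<and> first_passage (if \<omega> !! k then Suc h else h - 1) (stake l (sdrop (Suc k) \<omega>))"
    by (simp add: sdrop_snth)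
  also have "\<dots> \<longleftrightarrow> 1 < lead \<omega> k \<and> lead \<omega> (Suc k + l) = 1 \<and> (\<forall>j\<in>{Suc k..<Suc k + l}. 1 < lead \<omega> j)"
  proof (cases "h = 0")
    case True
    then show ?thesis
      using Suc.prems by simp
  next
    case False
    then have "lead \<omega> (Suc k) = 1 + int (if \<omega> !! k then Suc h else h - 1)"
      using Suc.prems by (simp add: lead_Suc)
    from Suc.IH[OF this] show ?thesis
      using False Suc.prems by simp
  qed
  also have "\<dots> \<longleftrightarrow> lead \<omega> (k + Suc l) = 1 \<and> (\<forall>j\<in>{k..<k + Suc l}. 1 < lead \<omega> j)"
    by (auto simp: atLeastLessThanSuc_atLeastAtMost less_Suc_eq_le le_less)
  finally show ?case .
qed

lemma lead_2: "\<omega> !! 0 \<Longrightarrow> \<omega> !! 1 \<Longrightarrow> lead \<omega> 2 = 2"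
  by (simp add: numeral_2_eq_2 lead_Suc)

lemma first_cycle_end_iff:
  assumes SS: "\<omega> !! 0" "\<omega> !! 1"
  shows "cycle_end \<omega> m \<and> (\<forall>j<m. \<not> cycle_end \<omega> j) \<longleftrightarrow>
    2 < m \<and> lead \<omega> m = 1 \<and> (\<forall>j\<in>{2..<m}. 1 < lead \<omega> j)"
proof
  assume first: "cycle_end \<omega> m \<and> (\<forall>j<m. \<not> cycle_end \<omega> j)"
  have "1 < lead \<omega> j" if "2 \<le> j" "j < m" for j
    using that
  proof (induction j)
    case 0
    then show ?case by simp
  next
    case (Suc j)
    show ?case
    proof (cases "j < 2")
      case True
      then have "Suc j = 2"
        using Suc.prems by simp
      then show ?thesis
        using lead_2[OF SS] by (simp only:)
    next
      case False
      then have "1 < lead \<omega> j" and "\<not> cycle_end \<omega> (Suc j)"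
        using Suc first by simp_all
      then show ?thesis
        using False by (auto simp: cycle_end_iff_lead lead_Suc)
    qed
  qed
  then show "2 < m \<and> lead \<omega> m = 1 \<and> (\<forall>j\<in>{2..<m}. 1 < lead \<omega> j)"
    using first by (auto simp: cycle_end_iff_lead)
next
  assume "2 < m \<and> lead \<omega> m = 1 \<and> (\<forall>j\<in>{2..<m}. 1 < lead \<omega> j)"
  then have m: "2 < m" and lead_m: "lead \<omega> m = 1" and above: "\<forall>j\<in>{2..<m}. 1 < lead \<omega> j"
    by blast+
  have "lead \<omega> m = lead \<omega> (m - 1) + (if \<omega> !! (m - 1) then 1 else -1)"
    using m lead_Suc[of \<omega> "m - 1"] by simp
  moreover have "1 < lead \<omega> (m - 1)"
    using m above by simp
  ultimately have "\<not> \<omega> !! (m - 1)"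
    using lead_m by (simp split: if_splits)
  then have "cycle_end \<omega> m"
    using m lead_m by (simp add: cycle_end_iff_lead)
  moreover have "\<not> cycle_end \<omega> j" if "j < m" for j
  proof
    assume "cycle_end \<omega> j"
    then have "j \<in> {2..<m}" and "lead \<omega> j = 1"
      using that by (simp_all add: cycle_end_iff_lead)
    then show False
      using above by fastforce
  qed
  ultimately show "cycle_end \<omega> m \<and> (\<forall>j<m. \<not> cycle_end \<omega> j)"
    by blast
qed

lemma cycleL_eq_iff_first_passage:
  assumes SS: "\<omega> !! 0" "\<omega> !! 1" and "2 \<le> n"
  shows "cycleL \<omega> = n \<longleftrightarrow> first_passage 1 (stake (2 * n - 3) (sdrop 2 \<omega>))"
proof -
  have "cycleL \<omega> = n \<longleftrightarrow> (\<exists>m. cycle_end \<omega> m \<and> (\<forall>j<m. \<not> cycle_end \<omega> j) \<and> numS m \<omega> = n)"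
  proof
    assume "cycleL \<omega> = n"
    then obtain m where "cycle_end \<omega> m" and "numS (LEAST m. cycle_end \<omega> m) \<omega> = n"
      using SS assms(3) by (auto simp: cycleL_def split: if_splits)
    then show "\<exists>m. cycle_end \<omega> m \<and> (\<forall>j<m. \<not> cycle_end \<omega> j) \<and> numS m \<omega> = n"
      by (metis LeastI not_less_Least)
  next
    assume "\<exists>m. cycle_end \<omega> m \<and> (\<forall>j<m. \<not> cycle_end \<omega> j) \<and> numS m \<omega> = n"
    then obtain m where m: "cycle_end \<omega> m" "\<forall>j<m. \<not> cycle_end \<omega> j" "numS m \<omega> = n"
      by blast
    then have "(LEAST m. cycle_end \<omega> m) = m"
      by (metis Least_equality not_le)
    then show "cycleL \<omega> = n"
      using SS m by (auto simp: cycleL_def)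
  qed
  also have "\<dots> \<longleftrightarrow> cycle_end \<omega> (2 * n - 1) \<and> (\<forall>j<2 * n - 1. \<not> cycle_end \<omega> j)"
    using numS_cycle_end by fastforce
  also have "\<dots> \<longleftrightarrow> first_passage 1 (stake (2 * n - 3) (sdrop 2 \<omega>))"
  proof -
    have "2 * n - 1 = 2 + (2 * n - 3)" "2 < 2 * n - 1"
      using assms(3) by simp_all
    then show ?thesis
      using first_cycle_end_iff[OF SS] first_passage_stake_sdrop[of \<omega> 2 1 "2 * n - 3"] lead_2[OF SS]
      by simp
  qed
  finally show ?thesis .
qed

lemma first_passage_prob_1: "first_passage_prob q 1 (2 * k + 1) = catalan k * q ^ k * (1 - q) ^ (k + 1)"
  by (simp add: first_passage_prob_def ballot_def catalan_def)

lemma cycleL_eq_1_iff: "cycleL \<omega> = 1 \<longleftrightarrow> \<not> \<omega> !! 0"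
proof -
  have "numS (LEAST m. cycle_end \<omega> m) \<omega> \<noteq> 1" if "\<exists>m. cycle_end \<omega> m"
    using numS_cycle_end[OF LeastI_ex[OF that]] LeastI_ex[OF that] by (auto simp: cycle_end_def)
  then show ?thesis
    by (auto simp: cycleL_def)
qed

lemma prob_cycleL_eq:
  assumes "0 \<le> q" "q \<le> 1" "2 \<le> n"
  shows "\<P>(\<omega> in sm_space q. cycleL \<omega> = n) =
    q * (q * first_passage_prob q 1 (2 * n - 3) + (1 - q) * (if n = 2 then 1 else 0))"
proof -
  have "\<P>(\<omega> in sm_space q. cycleL \<omega> = n) =
      \<P>(\<omega> in sm_space q. \<omega> !! 0 \<and>
        (\<not> \<omega> !! 1 \<and> n = 2 \<or> \<omega> !! 1 \<and> first_passage 1 (stake (2 * n - 3) (sdrop 2 \<omega>))))"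
    using cycleL_eq_iff_first_passage[OF _ _ assms(3)] assms(3)
    by (intro arg_cong[where f = "measure (sm_space q)"]) (auto simp: cycleL_def)
  also have "\<dots> = q * \<P>(\<omega> in sm_space q.
      \<not> \<omega> !! 0 \<and> n = 2 \<or> \<omega> !! 0 \<and> first_passage 1 (stake (2 * n - 3) (stl \<omega>)))"
    using assms by (subst prob_sm_space_cons) (simp_all add: numeral_2_eq_2)
  also have "\<dots> = q * (q * \<P>(\<omega> in sm_space q. first_passage 1 (stake (2 * n - 3) \<omega>)) +
      (1 - q) * (if n = 2 then 1 else 0))"
    using assms by (subst prob_sm_space_cons) simp_all
  finally show ?thesis
    using prob_first_passage[OF assms(1,2)] by simp
qed

theorem mainTheorem1:
  fixes q p :: real
  assumes "0 \<le> q" "q < 1 / 2" "p = 1 - q"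
  shows "measure (sm_space q) {\<omega> \<in> space (sm_space q). cycleL \<omega> = 1} = p \<and>
      measure (sm_space q) {\<omega> \<in> space (sm_space q). cycleL \<omega> = 2} = p * q + p * q ^ 2 \<and>
      (\<forall>n::nat. n \<ge> 3 \<longrightarrow>
           measure (sm_space q) {\<omega> \<in> space (sm_space q). cycleL \<omega> = n}
             = p * q ^ 2 * (p * q) ^ (n - 2) * catalan (n - 2))"
proof (intro conjI allI impI)
  have q: "0 \<le> q" "q \<le> 1"
    using assms by simp_all
  have "\<P>(\<omega> in sm_space q. cycleL \<omega> = 1) = \<P>(\<omega> in sm_space q. \<not> \<omega> !! 0)"
    by (simp only: cycleL_eq_1_iff)
  also have "\<dots> = p"
    using q assms(3) by (subst prob_sm_space_cons) simp_all
  finally show "\<P>(\<omega> in sm_space q. cycleL \<omega> = 1) = p" .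
  have "first_passage_prob q 1 1 = p"
    using first_passage_prob_1[of q 0] assms(3) by (simp add: catalan_def)
  then have "\<P>(\<omega> in sm_space q. cycleL \<omega> = 2) = q * (q * p + p)"
    using prob_cycleL_eq[OF q, of 2] assms(3) by simp
  then show "\<P>(\<omega> in sm_space q. cycleL \<omega> = 2) = p * q + p * q ^ 2"
    by (simp add: algebra_simps power2_eq_square)
next
  fix n :: nat
  assume "3 \<le> n"
  then have "2 * n - 3 = 2 * (n - 2) + 1" "2 \<le> n" "n \<noteq> 2"
    by simp_all
  then have "\<P>(\<omega> in sm_space q. cycleL \<omega> = n) = q * (q * (catalan (n - 2) * q ^ (n - 2) * p ^ (n - 2 + 1)))"
    using prob_cycleL_eq[of q n] first_passage_prob_1[of q "n - 2"] assms by simp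
  then show "\<P>(\<omega> in sm_space q. cycleL \<omega> = n) = p * q ^ 2 * (p * q) ^ (n - 2) * catalan (n - 2)"
    by (simp add: power_mult_distrib power2_eq_square algebra_simps)
qed

end
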